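(* Fix integers $k\ge 2$ and $1 \le t \le k/2$. Let $X$ be a set of $n$ elements with a fixed but unknown total order, and consider a $(k,t)$ scale, which on input any $k$-element subset of $X$ returns the $t$-th smallest element of that subset. Let $S$ be the set of the $t-1$ smallest elements of $X$ and $L$ the set of the $k-t$ largest elements of $X$. Then any off-line (non-adaptive) family of queries from whose results one can determine, for every possible ordering of $X$, the relative order of the elements of $X \setminus (S\cup L)$ must contain at least $$\frac{\binom{n}{k-(t-1)}}{\binom{k}{k-(t-1)}}$$ queries; in particular $\Omega(n^{k-t+1})$ queries are needed for fixed $k,t$.
   Context: A query is a $k$-element subset of $X$; the scale returns its $t$-th smallest element. In the off-line setting the whole family of queries must be specified in advance, and all results are then revealed simultaneously. *)

theory Defs
  imports Complex_Main
begin

text \<open>A total order on the finite ground set X is encoded by its rank function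
  sigma: X -> {0..<card X} (bijective); x is smaller than y iff sigma x < sigma y.\<close>
definition is_ordering :: "'a set \<Rightarrow> ('a \<Rightarrow> nat) \<Rightarrow> bool" where
  "is_ordering X \<sigma> \<longleftrightarrow> bij_betw \<sigma> X {0..<card X}"

definition scale_answer :: "('a \<Rightarrow> nat) \<Rightarrow> nat \<Rightarrow> 'a set \<Rightarrow> 'a" where
  "scale_answer \<sigma> t Q = (THE x. x \<in> Q \<and> card {y \<in> Q. \<sigma> y < \<sigma> x} = t - 1)"

definition small_set :: "'a set \<Rightarrow> ('a \<Rightarrow> nat) \<Rightarrow> nat \<Rightarrow> 'a set" where
  "small_set X \<sigma> t = {x \<in> X. \<sigma> x < t - 1}"

definition large_set :: "'a set \<Rightarrow> ('a \<Rightarrow> nat) \<Rightarrow> nat \<Rightarrow> nat \<Rightarrow> 'a set" where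
  "large_set X \<sigma> k t = {x \<in> X. card X - (k - t) \<le> \<sigma> x}"

definition middle_set :: "'a set \<Rightarrow> ('a \<Rightarrow> nat) \<Rightarrow> nat \<Rightarrow> nat \<Rightarrow> 'a set" where
  "middle_set X \<sigma> k t = X - (small_set X \<sigma> t \<union> large_set X \<sigma> k t)"

definition determines_middle_order :: "'a set \<Rightarrow> nat \<Rightarrow> nat \<Rightarrow> 'a set set \<Rightarrow> bool" where
  "determines_middle_order X k t F \<longleftrightarrow>
    (\<forall>\<sigma>1 \<sigma>2. is_ordering X \<sigma>1 \<and> is_ordering X \<sigma>2 \<and>
        (\<forall>Q\<in>F. scale_answer \<sigma>1 t Q = scale_answer \<sigma>2 t Q) \<longrightarrow>
        middle_set X \<sigma>1 k t = middle_set X \<sigma>2 k t \<and>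
        (\<forall>x\<in>middle_set X \<sigma>1 k t. \<forall>y\<in>middle_set X \<sigma>1 k t.
            \<sigma>1 x < \<sigma>1 y \<longleftrightarrow> \<sigma>2 x < \<sigma>2 y))"

end

theory Submission imports Defs "HOL-Combinatorics.Transposition" begin

text \<open>Every (k - t + 1)-subset T of X lies inside some query. Otherwise rank T on top and
  exchange its two lowest elements a and b. A query containing a and b misses an element of T,
  so at most k - t of its elements rank at or above a, and at least t rank below a; hence the
  exchange changes no answer. Yet a is the largest middle element before the exchange and lies
  in L after it. As a query contains only C(k, k - t + 1) such subsets, double counting gives
  the bound.\<close>

lemma card_subsets_le_card_mult_if_covered:
  assumes "finite X"
    and family: "\<forall>Q\<in>F. Q \<subseteq> X \<and> card Q = k"
    and covered: "\<And>T. T \<subseteq> X \<Longrightarrow> card T = m \<Longrightarrow> \<exists>Q\<in>F. T \<subseteq> Q"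
  shows "card X choose m \<le> card F * (k choose m)"
proof -
  have finF: "finite F"
    using assms(1) family by (meson PowI finite_Pow_iff finite_subset subsetI)
  have finQ: "finite Q" if "Q \<in> F" for Q
    using that family assms(1) finite_subset by blast
  have "card X choose m = card {T. T \<subseteq> X \<and> card T = m}"
    using n_subsets[OF assms(1)] by simp
  also have "\<dots> \<le> card (\<Union>Q\<in>F. {T. T \<subseteq> Q \<and> card T = m})"
    using covered by (intro card_mono) (auto simp: finF finQ)
  also have "\<dots> \<le> (\<Sum>Q\<in>F. card {T. T \<subseteq> Q \<and> card T = m})"
    by (rule card_UN_le[OF finF])
  also have "\<dots> = (\<Sum>Q\<in>F. k choose m)"
    using family finQ by (intro sum.cong) (simp_all add: n_subsets)
  finally show ?thesis by simp
qed

lemma adjacent_swap_less_iff: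
  assumes "inj_on \<sigma> X" "a \<in> X" "b \<in> X" "x \<in> X" "y \<in> X"
    and "\<sigma> b = Suc (\<sigma> a)" and "{x, y} \<noteq> {a, b}"
  shows "\<sigma> (transpose a b y) < \<sigma> (transpose a b x) \<longleftrightarrow> \<sigma> y < \<sigma> x"
proof -
  have eq: "\<sigma> u = \<sigma> v \<longleftrightarrow> u = v" if "u \<in> X" "v \<in> X" for u v
    using assms(1) that by (auto dest: inj_onD)
  show ?thesis
    using assms(2-7) eq[of x a] eq[of x b] eq[of y a] eq[of y b]
    by (cases "x = a"; cases "x = b"; cases "y = a"; cases "y = b") auto
qed

lemma scale_answer_adjacent_swap:
  assumes "inj_on \<sigma> X" "a \<in> X" "b \<in> X" "\<sigma> b = Suc (\<sigma> a)"
    and "Q \<subseteq> X" "finite Q" "t \<ge> 1"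
    and high: "a \<in> Q \<Longrightarrow> b \<in> Q \<Longrightarrow> t \<le> card {y\<in>Q. \<sigma> y < \<sigma> a}"
  shows "scale_answer (\<sigma> \<circ> transpose a b) t Q = scale_answer \<sigma> t Q"
proof -
  let ?\<tau> = "\<sigma> \<circ> transpose a b"
  have "card {y \<in> Q. ?\<tau> y < ?\<tau> x} = t - 1 \<longleftrightarrow> card {y \<in> Q. \<sigma> y < \<sigma> x} = t - 1"
    if "x \<in> Q" for x
  proof (cases "a \<in> Q \<and> b \<in> Q \<and> x \<in> {a, b}")
    case True
    let ?B = "{y\<in>Q. \<sigma> y < \<sigma> a}"
    have "?B \<subseteq> {y \<in> Q. \<sigma> y < \<sigma> x}" "?B \<subseteq> {y \<in> Q. ?\<tau> y < ?\<tau> x}"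
      using True assms(4) by (auto simp: transpose_def)
    then have "card ?B \<le> card {y \<in> Q. \<sigma> y < \<sigma> x}" "card ?B \<le> card {y \<in> Q. ?\<tau> y < ?\<tau> x}"
      using \<open>finite Q\<close> by (auto intro: card_mono)
    then show ?thesis using high True \<open>t \<ge> 1\<close> by fastforce
  next
    case False
    then have "{y \<in> Q. ?\<tau> y < ?\<tau> x} = {y \<in> Q. \<sigma> y < \<sigma> x}"
      using that assms(1-5) adjacent_swap_less_iff[of \<sigma> X a b x] by (auto simp: doubleton_eq_iff)
    then show ?thesis by simp
  qed
  then show ?thesis
    unfolding scale_answer_def by (metis (no_types, lifting))
qed

lemma ex_ordering_with_top_set:
  assumes "finite X" "T \<subseteq> X"
  obtains \<sigma> where "is_ordering X \<sigma>" "bij_betw \<sigma> T {card X - card T..<card X}"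
proof -
  have finT: "finite T" using assms finite_subset by blast
  have "card T \<le> card X" using assms card_mono by blast
  obtain g where g: "bij_betw g (X - T) {0..<card X - card T}"
    using ex_bij_betw_finite_nat[of "X - T"] assms
    by (auto simp: card_Diff_subset[OF finT assms(2)])
  obtain h where h: "bij_betw h T {card X - card T..<card X}"
    using finite_same_card_bij[OF finT, of "{card X - card T..<card X}"]
      \<open>card T \<le> card X\<close> by auto
  define \<sigma> where "\<sigma> x = (if x \<in> T then h x else g x)" for x
  have "bij_betw \<sigma> (X - T) {0..<card X - card T}"
    using g by (rule bij_betw_cong[THEN iffD1, rotated]) (simp add: \<sigma>_def)
  moreover have \<sigma>T: "bij_betw \<sigma> T {card X - card T..<card X}"
    using h by (rule bij_betw_cong[THEN iffD1, rotated]) (simp add: \<sigma>_def)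
  ultimately have "bij_betw \<sigma> ((X - T) \<union> T) ({0..<card X - card T} \<union> {card X - card T..<card X})"
    by (intro bij_betw_combine) auto
  moreover have "(X - T) \<union> T = X" using assms(2) by auto
  moreover have "{0..<card X - card T} \<union> {card X - card T..<card X} = {0..<card X}" by auto
  ultimately have "is_ordering X \<sigma>" unfolding is_ordering_def by simp
  with \<sigma>T show thesis using that by blast
qed

lemma mem_middle_set_iff:
  "x \<in> middle_set X \<sigma> k t \<longleftrightarrow> x \<in> X \<and> t - 1 \<le> \<sigma> x \<and> \<sigma> x < card X - (k - t)"
  unfolding middle_set_def small_set_def large_set_def by auto

lemma scale_answer_swap_bottom_of_uncovered_top_set:
  assumes "finite X" and \<sigma>: "is_ordering X \<sigma>"
    and "T \<subseteq> X" and \<sigma>T: "bij_betw \<sigma> T {card X - card T..<card X}"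
    and ab: "a \<in> T" "b \<in> T" "\<sigma> a = card X - card T" "\<sigma> b = Suc (\<sigma> a)"
    and "Q \<subseteq> X" "card Q = card T + t - 1" "\<not> T \<subseteq> Q" "1 \<le> t"
  shows "scale_answer (\<sigma> \<circ> transpose a b) t Q = scale_answer \<sigma> t Q"
proof (rule scale_answer_adjacent_swap)
  show inj: "inj_on \<sigma> X" using \<sigma> unfolding is_ordering_def bij_betw_def by blast
  show "a \<in> X" "b \<in> X" "\<sigma> b = Suc (\<sigma> a)" "Q \<subseteq> X" "1 \<le> t"
    using assms by auto
  show "finite Q" using \<open>finite X\<close> \<open>Q \<subseteq> X\<close> by (rule rev_finite_subset)
  have finT: "finite T" using \<open>finite X\<close> \<open>T \<subseteq> X\<close> by (rule rev_finite_subset)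
  have T_above: "y \<in> T" if "y \<in> X" "\<sigma> y \<ge> \<sigma> a" for y
  proof (rule ccontr)
    assume "y \<notin> T"
    then have "\<sigma> y \<in> \<sigma> ` X - \<sigma> ` T"
      using that inj \<open>T \<subseteq> X\<close> by (auto simp: inj_on_image_set_diff[symmetric])
    then show False
      using \<sigma> \<sigma>T that ab(3) unfolding is_ordering_def bij_betw_def by auto
  qed
  let ?B = "{y\<in>Q. \<sigma> y < \<sigma> a}"
  have "Q - ?B \<subseteq> Q \<inter> T"
    using \<open>Q \<subseteq> X\<close> by (auto intro: T_above simp: not_less)
  then have "card (Q - ?B) \<le> card (Q \<inter> T)"
    using finT by (intro card_mono) auto
  also have "\<dots> < card T"
    using \<open>\<not> T \<subseteq> Q\<close> finT by (intro psubset_card_mono) auto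
  finally have "card Q - card ?B < card T"
    using \<open>finite Q\<close> by (simp add: card_Diff_subset)
  then show "t \<le> card ?B" using \<open>card Q = card T + t - 1\<close> \<open>1 \<le> t\<close> by linarith
qed

lemma query_cover_if_determines_middle_order:
  assumes "finite X" "1 \<le> t" "2 * t \<le> k" "card X \<ge> k"
    and FQ: "\<forall>Q\<in>F. Q \<subseteq> X \<and> card Q = k"
    and det: "determines_middle_order X k t F"
    and "T \<subseteq> X" and cT: "card T = k - (t - 1)"
  shows "\<exists>Q\<in>F. T \<subseteq> Q"
proof (rule ccontr)
  assume uncovered: "\<not> (\<exists>Q\<in>F. T \<subseteq> Q)"
  obtain \<sigma> where \<sigma>: "is_ordering X \<sigma>" and \<sigma>T: "bij_betw \<sigma> T {card X - card T..<card X}"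
    using ex_ordering_with_top_set[OF \<open>finite X\<close> \<open>T \<subseteq> X\<close>] by blast
  have "card X - card T \<in> \<sigma> ` T" "Suc (card X - card T) \<in> \<sigma> ` T"
    using \<sigma>T cT assms(2-4) unfolding bij_betw_def by auto
  then obtain a b where ab: "a \<in> T" "b \<in> T" "\<sigma> a = card X - card T" "\<sigma> b = Suc (\<sigma> a)"
    by force
  define \<tau> where "\<tau> = \<sigma> \<circ> transpose a b"
  have "a \<in> X" "b \<in> X" using ab \<open>T \<subseteq> X\<close> by auto
  then have \<tau>: "is_ordering X \<tau>"
    using \<sigma> unfolding is_ordering_def \<tau>_def by (meson bij_betw_trans bij_betw_transpose_iff)
  have "scale_answer \<sigma> t Q = scale_answer \<tau> t Q" if "Q \<in> F" for Q
    using scale_answer_swap_bottom_of_uncovered_top_set[OF \<open>finite X\<close> \<sigma> \<open>T \<subseteq> X\<close> \<sigma>T ab]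
      FQ that uncovered cT assms(2,3) unfolding \<tau>_def by auto
  then have "middle_set X \<sigma> k t = middle_set X \<tau> k t"
    using det \<sigma> \<tau> unfolding determines_middle_order_def by blast
  moreover have "a \<in> middle_set X \<sigma> k t"
    using \<open>a \<in> X\<close> ab(3) cT assms(2-4) by (simp add: mem_middle_set_iff, arith)
  moreover have "a \<notin> middle_set X \<tau> k t"
    using ab(3,4) cT assms(2-4) by (simp add: mem_middle_set_iff \<tau>_def, arith)
  ultimately show False by simp
qed

theorem mainTheorem3:
  fixes X :: "'a set" and F :: "'a set set" and k t :: nat
  assumes "finite X"
    and "k \<ge> 2" and "1 \<le> t" and "2 * t \<le> k"
    and "card X \<ge> k"
    and "\<forall>Q\<in>F. Q \<subseteq> X \<and> card Q = k"
    and "determines_middle_order X k t F"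
  shows "real (card F) \<ge> real (card X choose (k - (t - 1))) / real (k choose (k - (t - 1)))"
proof -
  have "card X choose (k - (t - 1)) \<le> card F * (k choose (k - (t - 1)))"
    using assms query_cover_if_determines_middle_order[OF assms(1,3-7)]
    by (intro card_subsets_le_card_mult_if_covered) auto
  then have "real (card X choose (k - (t - 1))) \<le> real (card F) * real (k choose (k - (t - 1)))"
    by (metis of_nat_le_iff of_nat_mult)
  moreover have "0 < real (k choose (k - (t - 1)))" by simp
  ultimately show ?thesis by (simp add: pos_divide_le_eq)
qed

end
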